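(* Let $p<q$ be odd primes. Then $n=pq$ is a $G$-Lehmer number if and only if $q=p+2$ and $8$ divides $p+q$.
   Context: For a positive integer $n$, $\mathcal{G}_n=\{a+bi\in\mathbb{Z}[i]/n\mathbb{Z}[i] : a^2+b^2\equiv 1\pmod n\}$ and $\Phi(n)=|\mathcal{G}_n|$. The function $\mathcal{F}$ is defined by $\mathcal{F}(n)=n-1$ if $n\equiv 1\pmod 4$, $\mathcal{F}(n)=n+1$ if $n\equiv 3 \pmod 4$, $\mathcal{F}(n)=n$ otherwise. A composite number $n$ is a $G$-Lehmer number if $\Phi(n)$ divides $\mathcal{F}(n)$. *)

theory Defs
  imports "HOL-Computational_Algebra.Primes"
begin

text \<open>The unit circle group G_n in Z[i]/nZ[i]: elements a+bi with a,b residues mod n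
  (represented by 0 <= a,b < n) such that a^2+b^2 = 1 (mod n).\<close>
definition G_set :: "nat \<Rightarrow> (nat \<times> nat) set" where
  "G_set n = {(a, b). a < n \<and> b < n \<and> (a^2 + b^2) mod n = 1 mod n}"

definition Phi :: "nat \<Rightarrow> nat" where
  "Phi n = card (G_set n)"

definition F :: "nat \<Rightarrow> nat" where
  "F n = (if n mod 4 = 1 then n - 1 else if n mod 4 = 3 then n + 1 else n)"

definition G_Lehmer :: "nat \<Rightarrow> bool" where
  "G_Lehmer n \<longleftrightarrow> n > 1 \<and> \<not> prime n \<and> Phi n dvd F n"

end

theory Submission
  imports Defs "HOL-Number_Theory.Number_Theory"
begin

(* Phi is multiplicative by the Chinese remainder theorem. For an odd prime p, projecting the
   circle a^2 + b^2 = 1 from the point (-1, 0) identifies its other points with the slopes t for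
   which 1 + t^2 is a unit, so Phi p = p + 1 - #{t. t^2 = -1 mod p} = p - chi p, where chi is the
   nontrivial character modulo 4 (Euler's criterion decides whether -1 is a square).
   As F (p q) = p q - chi p chi q, the G-Lehmer condition asks that (p - chi p)(q - chi q) divide
   p q - chi p chi q; the quotient lies strictly between 0 and 2, so the two numbers coincide,
   which happens only for chi p = -1, chi q = 1 and q = p + 2. *)

lemma mem_G_set_iff:
  "(a, b) \<in> G_set n \<longleftrightarrow> a < n \<and> b < n \<and> [a^2 + b^2 = 1] (mod n)"
  by (simp add: G_set_def cong_def)

lemma finite_G_set: "finite (G_set n)"
  by (rule finite_subset[of _ "{..<n} \<times> {..<n}"]) (auto simp: G_set_def)

lemma cong_sum_squares_mod:
  "[(a mod d)^2 + (b mod d)^2 = a^2 + b^2] (mod d)" for a b d :: nat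
  by (intro cong_add cong_pow) (simp_all add: cong_def)

lemma G_set_mod_dvd:
  assumes "(a, b) \<in> G_set n" "d dvd n"
  shows "(a mod d, b mod d) \<in> G_set d"
proof -
  have "n > 0" using assms(1) by (auto simp: mem_G_set_iff)
  then have "d > 0" using assms(2) by (rule dvd_pos_nat)
  moreover have "[a^2 + b^2 = 1] (mod d)"
    using assms by (auto simp: mem_G_set_iff intro: cong_dvd_modulus_nat)
  ultimately show ?thesis
    by (simp add: mem_G_set_iff cong_trans[OF cong_sum_squares_mod])
qed

lemma Phi_mult:
  fixes m n :: nat
  assumes "coprime m n"
  shows "Phi (m * n) = Phi m * Phi n"
proof -
  define reduce where "reduce = (\<lambda>(a, b). ((a mod m, b mod m), (a mod n, b mod n)))"
  have "bij_betw reduce (G_set (m * n)) (G_set m \<times> G_set n)"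
  proof (rule bij_betwI')
    fix x y assume "x \<in> G_set (m * n)" "y \<in> G_set (m * n)"
    moreover obtain a b a' b' where "x = (a, b)" "y = (a', b')" by fastforce
    ultimately show "reduce x = reduce y \<longleftrightarrow> x = y"
      using assms by (auto simp: reduce_def mem_G_set_iff cong_def[symmetric]
          intro: cong_less_modulus_unique_nat[OF coprime_cong_mult_nat])
  next
    fix x assume "x \<in> G_set (m * n)"
    moreover obtain a b where "x = (a, b)" by fastforce
    ultimately show "reduce x \<in> G_set m \<times> G_set n"
      by (simp add: reduce_def G_set_mod_dvd)
  next
    fix y assume "y \<in> G_set m \<times> G_set n"
    then obtain a1 b1 a2 b2 where y: "y = ((a1, b1), (a2, b2))"
      and circ: "(a1, b1) \<in> G_set m" "(a2, b2) \<in> G_set n" by fastforce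
    obtain a b where ab: "[a = a1] (mod m)" "[a = a2] (mod n)" "[b = b1] (mod m)" "[b = b2] (mod n)"
      using binary_chinese_remainder_nat[OF assms] by metis
    let ?x = "(a mod (m * n), b mod (m * n))"
    have "[a^2 + b^2 = 1] (mod m)" "[a^2 + b^2 = 1] (mod n)"
      using ab circ by (auto simp: mem_G_set_iff intro: cong_trans[OF cong_add[OF cong_pow cong_pow]])
    then have "[a^2 + b^2 = 1] (mod m * n)"
      using assms coprime_cong_mult_nat by blast
    moreover have "m * n > 0" using circ by (auto simp: mem_G_set_iff)
    ultimately have "?x \<in> G_set (m * n)"
      by (simp add: mem_G_set_iff cong_trans[OF cong_sum_squares_mod])
    moreover have "reduce ?x = y"
      using ab circ by (auto simp: reduce_def y mem_G_set_iff cong_def mod_mod_cancel)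
    ultimately show "\<exists>x\<in>G_set (m * n). y = reduce x" by metis
  qed
  then show ?thesis
    unfolding Phi_def by (simp add: bij_betw_same_card card_cartesian_product)
qed

lemma coprime_of_not_prime_dvd:
  fixes p c :: nat
  assumes "prime p" "\<not> p dvd c"
  shows "coprime c p"
  using assms by (metis coprime_commute prime_imp_coprime)

lemma cong_solvable_mod_prime:
  fixes p c d :: nat
  assumes "prime p" "\<not> p dvd c"
  shows "\<exists>x<p. [x * c = d] (mod p)"
proof -
  obtain y where "[c * y = 1] (mod p)"
    using cong_solve_coprime_nat coprime_of_not_prime_dvd[OF assms] by auto
  have "[(y * d) mod p * c = (y * d) * c] (mod p)"
    by (intro cong_mult cong_refl) (simp add: cong_def)
  also have "(y * d) * c = (c * y) * d" by (simp add: ac_simps)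
  also have "[(c * y) * d = 1 * d] (mod p)"
    using \<open>[c * y = 1] (mod p)\<close> by (intro cong_mult cong_refl)
  finally have "[(y * d) mod p * c = d] (mod p)" by simp
  moreover have "(y * d) mod p < p" using assms(1) prime_gt_0_nat by simp
  ultimately show ?thesis by auto
qed

lemma circle_slope_iff:
  fixes p a b t :: nat
  assumes "coprime (a + 1) p" "[b = t * (a + 1)] (mod p)"
  shows "[a^2 + b^2 = 1] (mod p) \<longleftrightarrow> [(a + 1) * (1 + t^2) = 2] (mod p)"
proof -
  have "[a^2 + b^2 + (2 * a + 1) = a^2 + (t * (a + 1))^2 + (2 * a + 1)] (mod p)"
    using assms(2) by (intro cong_add cong_pow cong_refl)
  also have "a^2 + (t * (a + 1))^2 + (2 * a + 1) = (a + 1) * ((a + 1) * (1 + t^2))"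
    by (simp add: power2_eq_square algebra_simps)
  finally have expand: "[a^2 + b^2 + (2 * a + 1) = (a + 1) * ((a + 1) * (1 + t^2))] (mod p)" .
  have "[a^2 + b^2 = 1] (mod p) \<longleftrightarrow> [a^2 + b^2 + (2 * a + 1) = 1 + (2 * a + 1)] (mod p)"
    by (simp only: cong_add_rcancel_nat)
  also have "\<dots> \<longleftrightarrow> [(a + 1) * ((a + 1) * (1 + t^2)) = 1 + (2 * a + 1)] (mod p)"
    using expand by (meson cong_sym cong_trans)
  also have "1 + (2 * a + 1) = (a + 1) * 2" by simp
  also have "[(a + 1) * ((a + 1) * (1 + t^2)) = (a + 1) * 2] (mod p)
      \<longleftrightarrow> [(a + 1) * (1 + t^2) = 2] (mod p)"
    using assms(1) by (rule cong_mult_lcancel_nat)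
  finally show ?thesis .
qed

lemma minus_one_in_G_set:
  assumes "n > 1"
  shows "(n - 1, 0) \<in> G_set n"
proof -
  define k where "k = n - 2"
  have "n = k + 2" using assms by (simp add: k_def)
  then have "(n - 1)^2 + 0^2 = k * n + 1" by (simp add: power2_eq_square algebra_simps)
  then have "[(n - 1)^2 + 0^2 = 1] (mod n)" unfolding cong_def by (metis mod_mult_self3)
  then show ?thesis using assms by (simp add: mem_G_set_iff)
qed

lemma cong_two_factors_not_dvd:
  fixes p x y :: nat
  assumes "p > 2" "[x * y = 2] (mod p)"
  shows "\<not> p dvd x" "\<not> p dvd y"
proof -
  have "\<not> p dvd 2" using assms(1) by (auto dest: dvd_imp_le)
  then show "\<not> p dvd x" "\<not> p dvd y"
    using assms(2) by (metis cong_dvd_iff dvd_mult dvd_mult2)+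
qed

lemma G_set_prime_not_dvd_Suc:
  assumes "prime p" "(a, b) \<in> G_set p" "(a, b) \<noteq> (p - 1, 0)"
  shows "\<not> p dvd a + 1"
proof
  assume "p dvd a + 1"
  moreover have "a + 1 \<le> p" using assms(2) by (simp add: mem_G_set_iff)
  ultimately have a: "a + 1 = p" by (simp add: dvd_imp_le le_antisym)
  have "[a^2 + b^2 + (2 * a + 1) = 1 + (2 * a + 1)] (mod p)"
    using assms(2) by (intro cong_add cong_refl) (simp add: mem_G_set_iff)
  moreover have "a^2 + b^2 + (2 * a + 1) = p * p + b^2" "1 + (2 * a + 1) = 2 * p"
    using a by (auto simp: power2_eq_square algebra_simps)
  ultimately have "p dvd p * p + b^2 \<longleftrightarrow> p dvd 2 * p"
    by (metis cong_dvd_iff)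
  then have "p dvd b" using assms(1) by (simp add: prime_dvd_power_iff)
  then have "b = 0" using assms(2) by (auto simp: mem_G_set_iff dest: dvd_imp_le)
  with a assms(3) show False by auto
qed

text \<open>The slope of the chord through \<open>(-1, 0)\<close> and \<open>(a, b)\<close>, i.e. \<open>b / (a + 1)\<close> in \<open>\<int>/p\<close>.\<close>
definition circle_slope :: "nat \<Rightarrow> nat \<times> nat \<Rightarrow> nat" where
  "circle_slope p = (\<lambda>(a, b). SOME t. t < p \<and> [t * (a + 1) = b] (mod p))"

lemma circle_slope_spec:
  assumes "prime p" "\<not> p dvd a + 1"
  shows circle_slope_less: "circle_slope p (a, b) < p"
    and circle_slope_cong: "[b = circle_slope p (a, b) * (a + 1)] (mod p)"
  using someI_ex[OF cong_solvable_mod_prime[OF assms]] by (auto simp: circle_slope_def cong_sym)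

lemma circle_slope_on_circle:
  assumes "prime p" "(a, b) \<in> G_set p" "\<not> p dvd a + 1"
  shows "[(a + 1) * (1 + (circle_slope p (a, b))^2) = 2] (mod p)"
  using circle_slope_iff[OF coprime_of_not_prime_dvd[OF assms(1,3)] circle_slope_cong[OF assms(1,3)]]
    assms(2) by (simp add: mem_G_set_iff)

lemma inj_on_circle_slope:
  assumes p: "prime p" "p > 2"
  shows "inj_on (circle_slope p) (G_set p - {(p - 1, 0)})"
proof (rule inj_onI)
  fix x y assume "x \<in> G_set p - {(p - 1, 0)}" "y \<in> G_set p - {(p - 1, 0)}"
    "circle_slope p x = circle_slope p y"
  moreover obtain a b a' b' where xy: "x = (a, b)" "y = (a', b')" by fastforce
  ultimately have ab: "(a, b) \<in> G_set p" "\<not> p dvd a + 1"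
    and ab': "(a', b') \<in> G_set p" "\<not> p dvd a' + 1"
    and eq: "circle_slope p (a', b') = circle_slope p (a, b)"
    using G_set_prime_not_dvd_Suc[OF p(1)] by auto
  define t where "t = circle_slope p (a, b)"
  have "[(a + 1) * (1 + t^2) = (a' + 1) * (1 + t^2)] (mod p)"
    using circle_slope_on_circle[OF p(1) ab] cong_sym[OF circle_slope_on_circle[OF p(1) ab']]
    unfolding eq t_def by (rule cong_trans)
  moreover have "coprime (1 + t^2) p"
    using cong_two_factors_not_dvd(2)[OF p(2) circle_slope_on_circle[OF p(1) ab]]
    unfolding t_def by (rule coprime_of_not_prime_dvd[OF p(1)])
  ultimately have "[a + 1 = a' + 1] (mod p)" by (simp only: cong_mult_rcancel_nat)
  then have "[a = a'] (mod p)" by (simp only: cong_add_rcancel_nat)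
  then have "a = a'" using ab ab' by (simp add: mem_G_set_iff cong_less_modulus_unique_nat)
  have "[b = b'] (mod p)"
    using circle_slope_cong[OF p(1) ab(2), of b] cong_sym[OF circle_slope_cong[OF p(1) ab'(2), of b']]
    unfolding eq \<open>a = a'\<close> by (rule cong_trans)
  then have "b = b'" using ab ab' by (simp add: mem_G_set_iff cong_less_modulus_unique_nat)
  show "x = y" unfolding xy \<open>a = a'\<close> \<open>b = b'\<close> ..
qed

lemma circle_slope_image:
  assumes p: "prime p" "p > 2"
  shows "circle_slope p ` (G_set p - {(p - 1, 0)}) = {t. t < p \<and> \<not> p dvd t^2 + 1}"
proof (intro equalityI subsetI)
  fix t assume "t \<in> circle_slope p ` (G_set p - {(p - 1, 0)})"
  then obtain x where "x \<in> G_set p - {(p - 1, 0)}" "t = circle_slope p x" by blast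
  moreover obtain a b where "x = (a, b)" by fastforce
  ultimately have "(a, b) \<in> G_set p" "\<not> p dvd a + 1" "t = circle_slope p (a, b)"
    using G_set_prime_not_dvd_Suc[OF p(1)] by auto
  then show "t \<in> {t. t < p \<and> \<not> p dvd t^2 + 1}"
    using cong_two_factors_not_dvd(2)[OF p(2) circle_slope_on_circle[OF p(1)]]
      circle_slope_less[OF p(1)] by (simp add: add.commute)
next
  fix t assume t: "t \<in> {t. t < p \<and> \<not> p dvd t^2 + 1}"
  then have "\<not> p dvd 1 + t^2" by (simp add: add.commute)
  then obtain u where u: "u < p" "[u * (1 + t^2) = 2] (mod p)"
    using cong_solvable_mod_prime[OF p(1)] by blast
  have "\<not> p dvd u" using cong_two_factors_not_dvd(1)[OF p(2) u(2)] .
  define a where "a = u - 1"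
  define b where "b = (t * u) mod p"
  have au: "a + 1 = u" using \<open>\<not> p dvd u\<close> by (cases u) (simp_all add: a_def)
  have unit: "\<not> p dvd a + 1" using \<open>\<not> p dvd u\<close> unfolding au .
  have line: "[b = t * (a + 1)] (mod p)" unfolding b_def au by (simp add: cong_def)
  have "[a^2 + b^2 = 1] (mod p)"
    using circle_slope_iff[OF coprime_of_not_prime_dvd[OF p(1) unit] line] u(2)
    by (simp only: au mult.commute)
  then have ab: "(a, b) \<in> G_set p - {(p - 1, 0)}" using u p by (auto simp: mem_G_set_iff a_def b_def)
  have "[circle_slope p (a, b) * (a + 1) = t * (a + 1)] (mod p)"
    using cong_sym[OF circle_slope_cong[OF p(1) unit]] line by (rule cong_trans)
  then have "[circle_slope p (a, b) = t] (mod p)"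
    using cong_mult_rcancel_nat[OF coprime_of_not_prime_dvd[OF p(1) unit]] by blast
  then have "circle_slope p (a, b) = t"
    using circle_slope_less[OF p(1) unit] t by (simp add: cong_less_modulus_unique_nat)
  with ab show "t \<in> circle_slope p ` (G_set p - {(p - 1, 0)})" by force
qed

lemma card_G_set_prime:
  assumes "prime p" "p > 2"
  shows "card (G_set p) + card {t. t < p \<and> p dvd t^2 + 1} = p + 1"
proof -
  have "card (G_set p) = card (G_set p - {(p - 1, 0)}) + 1"
    using card.remove[OF finite_G_set minus_one_in_G_set] assms(2) by simp
  also have "card (G_set p - {(p - 1, 0)}) = card {t. t < p \<and> \<not> p dvd t^2 + 1}"
    using bij_betw_imageI[OF inj_on_circle_slope circle_slope_image, OF assms assms]
    by (rule bij_betw_same_card)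
  also have "card {t. t < p \<and> \<not> p dvd t^2 + 1} + card {t. t < p \<and> p dvd t^2 + 1} = p"
  proof -
    have "{t. t < p \<and> \<not> p dvd t^2 + 1} \<union> {t. t < p \<and> p dvd t^2 + 1} = {..<p}" by auto
    then show ?thesis by (subst card_Un_disjoint[symmetric]) auto
  qed
  ultimately show ?thesis by simp
qed

lemma QuadRes_minus_one_iff:
  fixes p :: nat
  assumes "prime p" "p > 2"
  shows "QuadRes (int p) (-1) \<longleftrightarrow> p mod 4 = 1"
proof -
  have "\<not> [-1 = (0::int)] (mod int p)" "\<not> [-1 = (1::int)] (mod int p)"
    using assms(2) by (auto simp: cong_iff_dvd_diff zdvd_not_zless)
  moreover have "[Legendre (-1) (int p) = (-1) ^ ((p - 1) div 2)] (mod int p)"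
    using euler_criterion[OF assms] by simp
  ultimately have "QuadRes (int p) (-1) \<longleftrightarrow> even ((p - 1) div 2)"
    by (cases "even ((p - 1) div 2)") (auto simp: Legendre_def cong_sym split: if_splits)
  also have "\<dots> \<longleftrightarrow> p mod 4 = 1"
    using prime_odd_nat[OF assms] by presburger
  finally show ?thesis .
qed

lemma dvd_imp_eq_of_less_double:
  fixes X Y :: int
  assumes "X dvd Y" "0 < Y" "Y < 2 * X"
  shows "Y = X"
proof -
  obtain k where k: "Y = X * k" using assms(1) by (auto elim: dvdE)
  have "X > 0" using assms(2,3) by linarith
  have "0 < k" using \<open>X > 0\<close> assms(2) unfolding k by (simp add: zero_less_mult_iff)
  moreover have "k < 2" using \<open>X > 0\<close> assms(3) unfolding k by (simp add: mult.commute)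
  ultimately show ?thesis using k by simp
qed

lemma int_dvd_square_plus_one_iff:
  "int p dvd int x ^ 2 + 1 \<longleftrightarrow> p dvd x ^ 2 + 1"
  by (metis of_nat_dvd_iff of_nat_1 of_nat_add of_nat_power)

lemma sqrt_minus_one_mod_prime_pair:
  fixes p s t :: nat
  assumes "prime p" "s < p" "t < p" "p dvd s^2 + 1" "p dvd t^2 + 1"
  shows "s = t \<or> s + t = p"
proof -
  have "int p dvd (int s ^ 2 + 1) - (int t ^ 2 + 1)"
    using assms(4,5) by (intro dvd_diff) (simp_all add: int_dvd_square_plus_one_iff)
  also have "(int s ^ 2 + 1) - (int t ^ 2 + 1) = (int s - int t) * (int s + int t)"
    by (simp add: power2_eq_square algebra_simps)
  finally consider "int p dvd int s - int t" | "int p dvd int s + int t"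
    using assms(1) prime_dvd_mult_iff[of "int p"] by auto
  then show ?thesis
  proof cases
    case 1
    then have "[s = t] (mod p)" by (simp add: cong_iff_dvd_diff flip: cong_int_iff)
    then show ?thesis using assms(2,3) by (simp add: cong_less_modulus_unique_nat)
  next
    case 2
    have "s > 0" "t > 0" using assms(1,4,5) by (auto intro!: gr0I)
    then have "int s + int t = int p"
      using 2 assms(2,3) by (intro dvd_imp_eq_of_less_double) auto
    then show ?thesis by simp
  qed
qed

lemma card_sqrt_minus_one_mod_prime:
  fixes p :: nat
  assumes "prime p" "p > 2"
  shows "card {t. t < p \<and> p dvd t^2 + 1} = (if p mod 4 = 1 then 2 else 0)"
proof (cases "p mod 4 = 1")
  case False
  have "\<not> p dvd t^2 + 1" for t
  proof
    assume "p dvd t^2 + 1"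
    then have "[(int t)^2 = -1] (mod int p)"
      by (simp add: cong_iff_dvd_diff int_dvd_square_plus_one_iff)
    then show False using QuadRes_minus_one_iff[OF assms] False by (auto simp: QuadRes_def)
  qed
  then show ?thesis using False by simp
next
  case True
  then obtain y where y: "[y^2 = -1] (mod int p)"
    using QuadRes_minus_one_iff[OF assms] by (auto simp: QuadRes_def)
  define t where "t = nat (y mod int p)"
  have "int t = y mod int p" using assms(2) by (simp add: t_def)
  then have "[(int t)^2 = y^2] (mod int p)" by (simp add: cong_def power_mod)
  then have "[(int t)^2 = -1] (mod int p)" using y by (rule cong_trans)
  then have t_root: "int p dvd int t ^ 2 + 1" by (simp add: cong_iff_dvd_diff)
  have t_less: "t < p" using assms(2) by (simp add: t_def nat_less_iff)
  have "int (p - t) ^ 2 + 1 = int p * (int p - 2 * int t) + (int t ^ 2 + 1)"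
    using t_less by (simp add: of_nat_diff power2_eq_square algebra_simps)
  then have "int p dvd int (p - t) ^ 2 + 1"
    using dvd_add[OF dvd_triv_left t_root] by (simp add: add.assoc)
  then have roots: "p dvd t^2 + 1" "p dvd (p - t)^2 + 1"
    using t_root by (simp_all add: int_dvd_square_plus_one_iff)
  then have "t > 0" using assms(1) by (auto intro!: gr0I)
  have "{s. s < p \<and> p dvd s^2 + 1} = {t, p - t}"
  proof (intro equalityI subsetI)
    fix s assume "s \<in> {s. s < p \<and> p dvd s^2 + 1}"
    then have "s = t \<or> s + t = p"
      using sqrt_minus_one_mod_prime_pair[OF assms(1) _ t_less _ roots(1)] by blast
    then show "s \<in> {t, p - t}" by auto
  next
    fix s assume "s \<in> {t, p - t}"
    then show "s \<in> {s. s < p \<and> p dvd s^2 + 1}" using roots t_less \<open>t > 0\<close> by auto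
  qed
  moreover have "t \<noteq> p - t" using prime_odd_nat[OF assms] by presburger
  ultimately show ?thesis using True by simp
qed

text \<open>The nontrivial character modulo 4 on odd numbers; its value on even numbers is never used.\<close>
definition chi4 :: "nat \<Rightarrow> int" where
  "chi4 n = (if n mod 4 = 1 then 1 else -1)"

lemma Phi_prime:
  assumes "prime p" "p > 2"
  shows "int (Phi p) = int p - chi4 p"
  using card_G_set_prime[OF assms] card_sqrt_minus_one_mod_prime[OF assms]
  by (auto simp: Phi_def chi4_def split: if_splits)

lemma chi4_mult:
  assumes "odd m" "odd n"
  shows "chi4 (m * n) = chi4 m * chi4 n"
proof -
  have "m mod 4 = 1 \<or> m mod 4 = 3" "n mod 4 = 1 \<or> n mod 4 = 3"
    using assms by presburger+
  moreover have "m * n mod 4 = (m mod 4) * (n mod 4) mod 4" by (simp add: mod_mult_eq)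
  ultimately show ?thesis by (auto simp: chi4_def)
qed

lemma F_odd:
  assumes "odd n"
  shows "int (F n) = int n - chi4 n"
proof -
  have "n mod 4 = 1 \<or> n mod 4 = 3" using assms by presburger
  moreover have "n \<ge> 1" using assms by presburger
  ultimately show ?thesis by (auto simp: F_def chi4_def of_nat_diff)
qed

lemma shifted_product_dvd_iff:
  fixes P Q e f :: int
  assumes "3 \<le> P" "P < Q" "e \<in> {-1, 1}" "f \<in> {-1, 1}"
  shows "(P - e) * (Q - f) dvd P * Q - e * f \<longleftrightarrow> e = -1 \<and> f = 1 \<and> Q = P + 2"
proof -
  have "1 * 2 \<le> (P - 2) * (Q - 2)" using assms(1,2) by (intro mult_mono) auto
  also have "\<dots> \<le> (P - 2 * e) * (Q - 2 * f)" using assms by (intro mult_mono) auto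
  finally have "P * Q - e * f < 2 * ((P - e) * (Q - f))"
    using assms(3,4) by (auto simp: algebra_simps)
  moreover have "0 < P * Q - e * f"
    using assms mult_mono[of 3 P 3 Q] by auto
  ultimately have "(P - e) * (Q - f) dvd P * Q - e * f \<longleftrightarrow> P * Q - e * f = (P - e) * (Q - f)"
    using dvd_imp_eq_of_less_double by auto
  also have "\<dots> \<longleftrightarrow> e = -1 \<and> f = 1 \<and> Q = P + 2"
    using assms by (auto simp: algebra_simps)
  finally show ?thesis .
qed

theorem mainTheorem14:
  fixes p q :: nat
  assumes "prime p" "prime q" "odd p" "odd q" "p < q"
  shows "G_Lehmer (p * q) \<longleftrightarrow> (q = p + 2 \<and> 8 dvd (p + q))"
proof -
  have "p > 2" "q > 2"
    using assms prime_ge_2_nat[of p] prime_ge_2_nat[of q] by presburger+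
  then have "p * q > 1" "\<not> prime (p * q)"
    using less_1_mult[of p q] prime_product[of p q] by auto
  moreover have "coprime p q" using assms(1,2,5) by (simp add: primes_coprime)
  ultimately have "G_Lehmer (p * q) \<longleftrightarrow> int (Phi p) * int (Phi q) dvd int (F (p * q))"
    by (simp add: G_Lehmer_def Phi_mult flip: of_nat_mult)
  also have "\<dots> \<longleftrightarrow> (int p - chi4 p) * (int q - chi4 q) dvd int p * int q - chi4 p * chi4 q"
    using assms \<open>p > 2\<close> \<open>q > 2\<close> by (simp add: Phi_prime F_odd chi4_mult)
  also have "\<dots> \<longleftrightarrow> chi4 p = -1 \<and> chi4 q = 1 \<and> int q = int p + 2"
    using \<open>p > 2\<close> assms(5) by (intro shifted_product_dvd_iff) (auto simp: chi4_def)
  also have "\<dots> \<longleftrightarrow> q = p + 2 \<and> 8 dvd (p + q)"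
  proof -
    have "q = p + 2 \<Longrightarrow> p mod 4 \<noteq> 1 \<and> q mod 4 = 1 \<longleftrightarrow> 8 dvd p + q"
      using assms(3) by presburger
    moreover have "int q = int p + 2 \<longleftrightarrow> q = p + 2" by linarith
    ultimately show ?thesis by (auto simp: chi4_def)
  qed
  finally show ?thesis .
qed

end
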